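(* Fix $M$, the weights $w_1\le\cdots\le w_M$, the speedup function $s$ and the budget $B$. Then there exist coefficients $a_1<a_2<\cdots<a_M$, not depending on the job sizes, such that for every choice of job sizes $x_1\ge x_2\ge\cdots\ge x_M>0$ the optimal value of OPT equals $$J^*=\sum_{i=1}^M a_ix_i.$$
   Context: Setting (problem OPT). There are $M$ jobs, all available at time $0$, with sizes $x_1\ge x_2\ge\cdots\ge x_M>0$ and weights $0<w_1\le w_2\le\cdots\le w_M$. A total resource $B>0$ is shared. The speedup function $s:[0,B]\to[0,\infty)$ satisfies: $s(0)=0$; $s$ is strictly increasing, strictly concave, differentiable, and $s'$ is continuous on $[0,B]$. A schedule consists of functions $\theta_i:(0,\infty)\to[0,B]$, $i=1,\dots,M$, each right-continuous in $t$, with $\sum_{i=1}^M\theta_i(t)\le B$ for all $t>0$. The service received by job $i$ on $[t_1,t_2]$ is $Q_i(t_1,t_2)=\int_{t_1}^{t_2}s(\theta_i(t))\,dt$. The completion time $T_i$ of job $i$ satisfies $Q_i(0,T_i)=x_i$, and $\theta_i(t)=0$ for $t>T_i$. OPT is the problem of choosing a schedule minimizing $J=\sum_{i=1}^M w_iT_i$; $J^*$ denotes its optimal (minimum) value. *)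

theory Defs
  imports "HOL-Analysis.Analysis"
begin

definition speedup_fn :: "(real \<Rightarrow> real) \<Rightarrow> real \<Rightarrow> bool" where
  "speedup_fn s B \<longleftrightarrow>
     s 0 = 0 \<and>
     strict_mono_on {0..B} s \<and>
     (\<forall>u\<in>{0..B}. \<forall>v\<in>{0..B}. \<forall>l::real. u \<noteq> v \<and> 0 < l \<and> l < 1 \<longrightarrow>
        s ((1 - l) * u + l * v) > (1 - l) * s u + l * s v) \<and>
     (\<exists>s'. (\<forall>u\<in>{0..B}. (s has_real_derivative s' u) (at u within {0..B})) \<and>
           continuous_on {0..B} s')"

definition feasible_schedule ::
  "nat \<Rightarrow> real \<Rightarrow> (real \<Rightarrow> real) \<Rightarrow> (nat \<Rightarrow> real) \<Rightarrow>
   (nat \<Rightarrow> real \<Rightarrow> real) \<Rightarrow> (nat \<Rightarrow> real) \<Rightarrow> bool" where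
  "feasible_schedule M B s x \<theta> T \<longleftrightarrow>
     (\<forall>i\<in>{1..M}.
        0 \<le> T i \<and>
        (\<forall>t>0. 0 \<le> \<theta> i t \<and> \<theta> i t \<le> B) \<and>
        (\<forall>t>0. continuous (at_right t) (\<theta> i)) \<and>
        (\<lambda>t. s (\<theta> i t)) integrable_on {0..T i} \<and>
        integral {0..T i} (\<lambda>t. s (\<theta> i t)) = x i \<and>
        (\<forall>t>T i. \<theta> i t = 0)) \<and>
     (\<forall>t>0. (\<Sum>i\<in>{1..M}. \<theta> i t) \<le> B)"

definition OPT_values ::
  "nat \<Rightarrow> real \<Rightarrow> (real \<Rightarrow> real) \<Rightarrow> (nat \<Rightarrow> real) \<Rightarrow> (nat \<Rightarrow> real) \<Rightarrow> real set" where
  "OPT_values M B s w x =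
     {(\<Sum>i\<in>{1..M}. w i * T i) | \<theta> T. feasible_schedule M B s x \<theta> T}"

end

(* Call a_1 < ... < a_M balancing coefficients if, for every m, the largest value of
   a_1 s(th_1) + ... + a_m s(th_m) over budget splits th_1 + ... + th_m <= B equals w_1 + ... + w_m.
   They are built one at a time: when a_(m+1) ranges over [a_m, oo) that maximum is continuous,
   exceeds w_1 + ... + w_(m+1) for large a_(m+1), and (by strict concavity of s) falls short of it
   at a_(m+1) = a_m, so the intermediate value theorem provides a_(m+1) > a_m.

   Lower bound: rank the jobs by decreasing completion time. At every time t the unfinished jobs
   hold the ranks 1..n(t), so the a-weighted service rate with respect to the ranks is at most
   w_1 + ... + w_n(t), which is at most the total weight of the unfinished jobs. Integrating over
   t gives sum_j a_rank(j) x_j <= sum_j w_j T_j, and the rearrangement inequality (a increasing,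
   x decreasing) gives sum_i a_i x_i <= sum_j a_rank(j) x_j.

   Upper bound: run the maximising split of jobs 1..l while exactly these jobs are unfinished,
   with phase lengths solving a triangular linear system; every phase then contributes equally to
   sum_i a_i x_i and to sum_i w_i T_i. *)

theory Submission
  imports Defs
begin

lemma speedup_fn_zero: "speedup_fn s B \<Longrightarrow> s 0 = 0"
  by (simp add: speedup_fn_def)

lemma speedup_fn_continuous_on: "speedup_fn s B \<Longrightarrow> continuous_on {0..B} s"
  unfolding speedup_fn_def continuous_on_eq_continuous_within
  by (metis DERIV_continuous)

lemma speedup_fn_less: "speedup_fn s B \<Longrightarrow> 0 \<le> u \<Longrightarrow> u < v \<Longrightarrow> v \<le> B \<Longrightarrow> s u < s v"
  unfolding speedup_fn_def strict_mono_on_def by auto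

lemma speedup_fn_le: "speedup_fn s B \<Longrightarrow> 0 \<le> u \<Longrightarrow> u \<le> v \<Longrightarrow> v \<le> B \<Longrightarrow> s u \<le> s v"
  using speedup_fn_less[of s B u v] by (cases "u = v") auto

lemma speedup_fn_nonneg: "speedup_fn s B \<Longrightarrow> 0 \<le> u \<Longrightarrow> u \<le> B \<Longrightarrow> 0 \<le> s u"
  using speedup_fn_le[of s B 0 u] speedup_fn_zero[of s B] by auto

lemma speedup_fn_pos: "speedup_fn s B \<Longrightarrow> 0 < u \<Longrightarrow> u \<le> B \<Longrightarrow> 0 < s u"
  using speedup_fn_less[of s B 0 u] speedup_fn_zero[of s B] by auto

lemma speedup_fn_strictly_concave:
  "speedup_fn s B \<Longrightarrow> u \<in> {0..B} \<Longrightarrow> v \<in> {0..B} \<Longrightarrow> u \<noteq> v \<Longrightarrow> 0 < l \<Longrightarrow> l < 1 \<Longrightarrow>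
    (1 - l) * s u + l * s v < s ((1 - l) * u + l * v)"
  unfolding speedup_fn_def by blast

lemma speedup_fn_concave:
  assumes "speedup_fn s B" "u \<in> {0..B}" "v \<in> {0..B}" "0 \<le> l" "l \<le> 1"
  shows "(1 - l) * s u + l * s v \<le> s ((1 - l) * u + l * v)"
proof (cases "u = v \<or> l = 0 \<or> l = 1")
  case True
  then show ?thesis by (auto simp: algebra_simps)
next
  case False
  then show ?thesis using speedup_fn_strictly_concave[OF assms(1-3), of l] assms(4,5) by auto
qed

lemma speedup_fn_mix_ge:
  assumes sp: "speedup_fn s B" and uv: "u \<in> {0..B}" "v \<in> {0..B}" and t: "0 \<le> t" "t \<le> 1"
  shows "s u + s v \<le> s ((1 - t) * u + t * v) + s ((1 - t) * v + t * u)"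
  using speedup_fn_concave[OF sp uv t] speedup_fn_concave[OF sp uv(2,1) t]
  by (simp add: algebra_simps)

lemma speedup_fn_mix_gt:
  assumes sp: "speedup_fn s B" and uv: "u \<in> {0..B}" "v \<in> {0..B}" "u \<noteq> v" and t: "0 < t" "t < 1"
  shows "s u + s v < s ((1 - t) * u + t * v) + s ((1 - t) * v + t * u)"
  using speedup_fn_strictly_concave[OF sp uv t] speedup_fn_concave[OF sp uv(2,1), of t] t
  by (simp add: algebra_simps)

section \<open>The maximal weighted service rate\<close>

definition allocations :: "real \<Rightarrow> nat \<Rightarrow> (nat \<Rightarrow> real) set" where
  "allocations B m = {\<theta>. (\<forall>k\<in>{1..m}. 0 \<le> \<theta> k) \<and> (\<Sum>k=1..m. \<theta> k) \<le> B}"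

definition weighted_rate :: "(real \<Rightarrow> real) \<Rightarrow> (nat \<Rightarrow> real) \<Rightarrow> nat \<Rightarrow> (nat \<Rightarrow> real) \<Rightarrow> real" where
  "weighted_rate s a m \<theta> = (\<Sum>k=1..m. a k * s (\<theta> k))"

definition max_rate :: "(real \<Rightarrow> real) \<Rightarrow> real \<Rightarrow> (nat \<Rightarrow> real) \<Rightarrow> nat \<Rightarrow> real" where
  "max_rate s B a m = Sup (weighted_rate s a m ` allocations B m)"

lemma allocations_bounds: "\<theta> \<in> allocations B m \<Longrightarrow> k \<in> {1..m} \<Longrightarrow> 0 \<le> \<theta> k \<and> \<theta> k \<le> B"
proof -
  assume \<theta>: "\<theta> \<in> allocations B m" and k: "k \<in> {1..m}"
  then have "\<theta> k \<le> (\<Sum>k=1..m. \<theta> k)"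
    by (intro member_le_sum) (auto simp: allocations_def)
  then show ?thesis using \<theta> k by (auto simp: allocations_def)
qed

lemma allocations_Suc_D: "\<theta> \<in> allocations B (Suc m) \<Longrightarrow> \<theta> \<in> allocations B m"
  unfolding allocations_def by (auto intro: order_trans[rotated])

lemma weighted_rate_cong:
  "(\<And>k. k \<in> {1..m} \<Longrightarrow> a k = a' k) \<Longrightarrow> (\<And>k. k \<in> {1..m} \<Longrightarrow> \<theta> k = \<theta>' k) \<Longrightarrow>
    weighted_rate s a m \<theta> = weighted_rate s a' m \<theta>'"
  unfolding weighted_rate_def by (rule sum.cong) auto

lemma weighted_rate_Suc:
  "weighted_rate s a (Suc m) \<theta> = weighted_rate s a m \<theta> + a (Suc m) * s (\<theta> (Suc m))"
  by (simp add: weighted_rate_def)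

lemma weighted_rate_fun_upd_Suc:
  "weighted_rate s a (Suc m) (\<theta>(Suc m := x)) = weighted_rate s a m \<theta> + a (Suc m) * s x"
proof -
  have "weighted_rate s a m (\<theta>(Suc m := x)) = weighted_rate s a m \<theta>"
    by (rule weighted_rate_cong) auto
  then show ?thesis by (simp add: weighted_rate_Suc)
qed

lemma sum_fun_upd:
  fixes g :: "'a \<Rightarrow> 'b \<Rightarrow> real"
  assumes "finite A" "j \<in> A"
  shows "(\<Sum>k\<in>A. g k ((f(j := v)) k)) = (\<Sum>k\<in>A. g k (f k)) - g j (f j) + g j v"
proof -
  have "(\<Sum>k\<in>A. g k ((f(j := v)) k)) = g j v + (\<Sum>k\<in>A - {j}. g k (f k))"
    using sum.remove[OF assms, of "\<lambda>k. g k ((f(j := v)) k)"] by simp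
  also have "\<dots> = (\<Sum>k\<in>A. g k (f k)) - g j (f j) + g j v"
    using sum.remove[OF assms, of "\<lambda>k. g k (f k)"] by simp
  finally show ?thesis .
qed

lemma weighted_rate_fun_upd:
  "j \<in> {1..m} \<Longrightarrow>
    weighted_rate s a m (\<theta>(j := v)) = weighted_rate s a m \<theta> - a j * s (\<theta> j) + a j * s v"
  unfolding weighted_rate_def using sum_fun_upd[of "{1..m}" j "\<lambda>k x. a k * s x"] by simp

lemma weighted_rate_coeff_upd:
  "j \<in> {1..m} \<Longrightarrow>
    weighted_rate s (a(j := c)) m \<theta> = weighted_rate s a m \<theta> - a j * s (\<theta> j) + c * s (\<theta> j)"
  unfolding weighted_rate_def using sum_fun_upd[of "{1..m}" j "\<lambda>k x. x * s (\<theta> k)"] by simp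

lemma weighted_rate_has_max:
  assumes "0 \<le> B" and "continuous_on {0..B} s"
  obtains \<theta> where "\<theta> \<in> allocations B m"
    and "\<And>\<phi>. \<phi> \<in> allocations B m \<Longrightarrow> weighted_rate s a m \<phi> \<le> weighted_rate s a m \<theta>"
proof -
  \<comment> \<open>Pinning the irrelevant coordinates to \<open>0\<close> makes the feasible set compact in the product topology.\<close>
  define S where "S = (\<lambda>k::nat. if k \<in> {1..m} then {0..B} else {0::real})"
  define K where "K = PiE UNIV S \<inter> {\<theta>. (\<Sum>k=1..m. \<theta> k) \<le> B}"
  have K_bounds: "\<theta> k \<in> {0..B}" if "\<theta> \<in> K" "k \<in> {1..m}" for \<theta> k
  proof -
    have "\<theta> k \<in> S k" using that(1) by (auto simp: K_def PiE_iff)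
    then show ?thesis using that(2) by (simp add: S_def)
  qed
  have "compact (PiE UNIV S)"
    using compactin_PiE[of "\<lambda>_. euclidean" UNIV S]
    by (simp add: S_def euclidean_product_topology)
  moreover have "closed {\<theta>::nat\<Rightarrow>real. (\<Sum>k=1..m. \<theta> k) \<le> B}"
    by (intro closed_Collect_le continuous_on_sum continuous_on_const continuous_on_product_coordinates)
  ultimately have "compact K" unfolding K_def by (rule compact_Int_closed)
  moreover have "continuous_on K (weighted_rate s a m)"
    unfolding weighted_rate_def
  proof (intro continuous_on_sum continuous_on_mult_left)
    fix k assume "k \<in> {1..m}"
    then have "(\<lambda>\<theta>. \<theta> k) ` K \<subseteq> {0..B}" using K_bounds by blast
    moreover have "continuous_on K (\<lambda>\<theta>. \<theta> k)"
      by (rule continuous_on_subset[OF continuous_on_product_coordinates]) simp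
    ultimately show "continuous_on K (\<lambda>\<theta>. s (\<theta> k))"
      using continuous_on_compose2[OF assms(2)] by blast
  qed
  moreover have "(\<lambda>_. 0) \<in> K" using assms(1) by (auto simp: K_def S_def PiE_iff)
  ultimately obtain \<theta> where \<theta>: "\<theta> \<in> K" "\<And>\<phi>. \<phi> \<in> K \<Longrightarrow> weighted_rate s a m \<phi> \<le> weighted_rate s a m \<theta>"
    using continuous_attains_sup[of K] by blast
  show thesis
  proof
    show "\<theta> \<in> allocations B m"
      using \<theta>(1) K_bounds[OF \<theta>(1)] by (auto simp: K_def allocations_def)
  next
    fix \<phi> assume \<phi>: "\<phi> \<in> allocations B m"
    define \<phi>' where "\<phi>' = (\<lambda>k. if k \<in> {1..m} then \<phi> k else 0)"
    have same: "(\<Sum>k=1..m. \<phi>' k) = (\<Sum>k=1..m. \<phi> k)" by (rule sum.cong) (auto simp: \<phi>'_def)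
    have "\<phi>' \<in> K"
      using \<phi> allocations_bounds[OF \<phi>] unfolding K_def S_def allocations_def same
      by (auto simp: PiE_iff \<phi>'_def)
    moreover have "weighted_rate s a m \<phi>' = weighted_rate s a m \<phi>"
      by (rule weighted_rate_cong) (auto simp: \<phi>'_def)
    ultimately show "weighted_rate s a m \<phi> \<le> weighted_rate s a m \<theta>" using \<theta>(2) by metis
  qed
qed

lemma max_rate_attained:
  assumes "speedup_fn s B" "0 \<le> B"
  obtains \<theta> where "\<theta> \<in> allocations B m" "weighted_rate s a m \<theta> = max_rate s B a m"
proof -
  obtain \<theta> where \<theta>: "\<theta> \<in> allocations B m"
    "\<And>\<phi>. \<phi> \<in> allocations B m \<Longrightarrow> weighted_rate s a m \<phi> \<le> weighted_rate s a m \<theta>"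
    using weighted_rate_has_max[OF assms(2) speedup_fn_continuous_on[OF assms(1)], where m=m and a=a]
    by blast
  have "max_rate s B a m = weighted_rate s a m \<theta>"
    unfolding max_rate_def using \<theta> by (intro cSup_eq_maximum) auto
  with \<theta>(1) show thesis by (intro that) auto
qed

lemma weighted_rate_le_max_rate:
  assumes "speedup_fn s B" "0 \<le> B" "\<theta> \<in> allocations B m"
  shows "weighted_rate s a m \<theta> \<le> max_rate s B a m"
proof -
  obtain \<theta>' where \<theta>': "\<theta>' \<in> allocations B m"
    and max: "\<And>\<phi>. \<phi> \<in> allocations B m \<Longrightarrow> weighted_rate s a m \<phi> \<le> weighted_rate s a m \<theta>'"
    using weighted_rate_has_max[OF assms(2) speedup_fn_continuous_on[OF assms(1)], where m=m and a=a]
    by blast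
  have "max_rate s B a m = weighted_rate s a m \<theta>'"
    unfolding max_rate_def using \<theta>' max by (intro cSup_eq_maximum) auto
  with max[OF assms(3)] show ?thesis by simp
qed

lemma max_rate_cong:
  "(\<And>k. k \<in> {1..m} \<Longrightarrow> a k = a' k) \<Longrightarrow> max_rate s B a m = max_rate s B a' m"
proof -
  assume "\<And>k. k \<in> {1..m} \<Longrightarrow> a k = a' k"
  then have "weighted_rate s a m = weighted_rate s a' m"
    by (intro ext weighted_rate_cong) auto
  then show ?thesis by (simp add: max_rate_def)
qed

lemma max_rate_full_budget:
  assumes sp: "speedup_fn s B" and "0 \<le> B" and m: "1 \<le> m" and a_pos: "\<forall>k\<in>{1..m}. 0 < a k"
    and \<theta>: "\<theta> \<in> allocations B m" and opt: "weighted_rate s a m \<theta> = max_rate s B a m"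
  shows "(\<Sum>k=1..m. \<theta> k) = B"
proof (rule ccontr)
  assume "(\<Sum>k=1..m. \<theta> k) \<noteq> B"
  with \<theta> have slack: "0 < B - (\<Sum>k=1..m. \<theta> k)" by (auto simp: allocations_def)
  define \<phi> where "\<phi> = \<theta>(m := B - (\<Sum>k=1..m. \<theta> k) + \<theta> m)"
  have m_in: "m \<in> {1..m}" using m by simp
  have \<theta>m: "0 \<le> \<theta> m" "\<theta> m \<le> (\<Sum>k=1..m. \<theta> k)"
    using allocations_bounds[OF \<theta> m_in] \<theta> m_in by (auto simp: allocations_def intro: member_le_sum)
  have "(\<Sum>k=1..m. \<phi> k) = B"
    unfolding \<phi>_def using sum_fun_upd[of "{1..m}" m "\<lambda>k x. x" \<theta>] m_in by simp
  then have "\<phi> \<in> allocations B m"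
    using \<theta> \<theta>m slack by (auto simp: allocations_def \<phi>_def)
  then have "weighted_rate s a m \<phi> \<le> weighted_rate s a m \<theta>"
    using weighted_rate_le_max_rate[OF sp \<open>0 \<le> B\<close>] opt by simp
  moreover have "s (\<theta> m) < s (\<phi> m)"
    using speedup_fn_less[OF sp \<theta>m(1)] slack \<theta>m by (simp add: \<phi>_def)
  ultimately show False
    using weighted_rate_fun_upd[OF m_in, of s a \<theta>] a_pos m_in by (simp add: \<phi>_def)
qed

lemma max_rate_sorted:
  assumes sp: "speedup_fn s B" and "0 \<le> B" and a_mono: "strict_mono_on {1..m} a"
    and \<theta>: "\<theta> \<in> allocations B m" and opt: "weighted_rate s a m \<theta> = max_rate s B a m"
    and i: "i \<in> {1..m}" and j: "j \<in> {1..m}" and "i \<le> j"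
  shows "\<theta> i \<le> \<theta> j"
proof (rule ccontr)
  assume "\<not> \<theta> i \<le> \<theta> j"
  then have "i < j" using \<open>i \<le> j\<close> by (cases "i = j") auto
  define \<phi> where "\<phi> = \<theta>(i := \<theta> j, j := \<theta> i)"
  have "(\<Sum>k=1..m. \<phi> k) = (\<Sum>k=1..m. \<theta> k)"
    unfolding \<phi>_def using sum_fun_upd[of "{1..m}" _ "\<lambda>k x. x"] i j \<open>i < j\<close> by simp
  then have "\<phi> \<in> allocations B m" using \<theta> i j by (auto simp: allocations_def \<phi>_def)
  then have "weighted_rate s a m \<phi> \<le> weighted_rate s a m \<theta>"
    using weighted_rate_le_max_rate[OF sp \<open>0 \<le> B\<close>] opt by simp
  moreover have "weighted_rate s a m \<phi> - weighted_rate s a m \<theta> = (a j - a i) * (s (\<theta> i) - s (\<theta> j))"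
    unfolding \<phi>_def
    using weighted_rate_fun_upd[OF i, of s a \<theta>] weighted_rate_fun_upd[OF j, of s a "\<theta>(i := \<theta> j)"]
      \<open>i < j\<close>
    by (simp add: algebra_simps)
  moreover have "s (\<theta> j) < s (\<theta> i)"
    using speedup_fn_less[OF sp] allocations_bounds[OF \<theta> i] allocations_bounds[OF \<theta> j]
      \<open>\<not> \<theta> i \<le> \<theta> j\<close> by simp
  with strict_mono_onD[OF a_mono i j \<open>i < j\<close>] have "0 < (a j - a i) * (s (\<theta> i) - s (\<theta> j))" by simp
  ultimately show False by linarith
qed

lemma max_rate_maximiser_last_pos:
  assumes sp: "speedup_fn s B" and "0 \<le> B" and a_mono: "strict_mono_on {1..m} a"
    and \<theta>: "\<theta> \<in> allocations B m" and opt: "weighted_rate s a m \<theta> = max_rate s B a m"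
    and pos: "0 < max_rate s B a m"
  shows "0 < \<theta> m"
proof (rule ccontr)
  assume "\<not> 0 < \<theta> m"
  have "\<theta> k = 0" if k: "k \<in> {1..m}" for k
    using max_rate_sorted[OF sp \<open>0 \<le> B\<close> a_mono \<theta> opt k, of m] allocations_bounds[OF \<theta> k] k
      \<open>\<not> 0 < \<theta> m\<close> by auto
  then have "weighted_rate s a m \<theta> = 0"
    using speedup_fn_zero[OF sp] by (simp add: weighted_rate_def)
  with opt pos show False by simp
qed

section \<open>Balancing coefficients\<close>

definition mix :: "real \<Rightarrow> (nat \<Rightarrow> real) \<Rightarrow> (nat \<Rightarrow> real) \<Rightarrow> nat \<Rightarrow> real" where
  "mix t \<theta> \<psi> k = (1 - t) * \<theta> k + t * \<psi> k"

lemma sum_mix: "(\<Sum>k\<in>A. mix t \<theta> \<psi> k) = (1 - t) * (\<Sum>k\<in>A. \<theta> k) + t * (\<Sum>k\<in>A. \<psi> k)"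
  by (simp add: mix_def sum.distrib sum_distrib_left)

lemma mix_upd_in_allocations:
  assumes "\<forall>k\<in>{1..p}. 0 \<le> \<theta> k" "\<forall>k\<in>{1..p}. 0 \<le> \<psi> k" "0 \<le> t" "t \<le> 1" "0 \<le> u"
    and "(1 - t) * (\<Sum>k=1..p. \<theta> k) + t * (\<Sum>k=1..p. \<psi> k) + u \<le> B"
  shows "(mix t \<theta> \<psi>)(Suc p := u) \<in> allocations B (Suc p)"
proof -
  have "(\<Sum>k=1..p. ((mix t \<theta> \<psi>)(Suc p := u)) k) = (\<Sum>k=1..p. mix t \<theta> \<psi> k)"
    by (rule sum.cong) auto
  then have "(\<Sum>k=1..Suc p. ((mix t \<theta> \<psi>)(Suc p := u)) k) \<le> B"
    using assms(6) by (simp add: sum_mix)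
  moreover have "\<forall>k\<in>{1..Suc p}. 0 \<le> ((mix t \<theta> \<psi>)(Suc p := u)) k"
    using assms(1-5) by (auto simp: mix_def le_Suc_eq)
  ultimately show ?thesis by (simp add: allocations_def)
qed

lemma weighted_rate_mix_ge:
  assumes sp: "speedup_fn s B" and a: "\<forall>k\<in>{1..p}. 0 \<le> a k"
    and \<theta>: "\<theta> \<in> allocations B p" and \<psi>: "\<psi> \<in> allocations B p" and t: "0 \<le> t" "t \<le> 1"
  shows "weighted_rate s a p \<theta> + weighted_rate s a p \<psi> \<le>
    weighted_rate s a p (mix t \<theta> \<psi>) + weighted_rate s a p (mix t \<psi> \<theta>)"
proof -
  have "a k * (s (\<theta> k) + s (\<psi> k)) \<le> a k * (s (mix t \<theta> \<psi> k) + s (mix t \<psi> \<theta> k))"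
    if "k \<in> {1..p}" for k
    using speedup_fn_mix_ge[OF sp _ _ t, of "\<theta> k" "\<psi> k"] allocations_bounds[OF \<theta> that]
      allocations_bounds[OF \<psi> that] a that
    by (intro mult_left_mono) (auto simp: mix_def)
  then show ?thesis
    unfolding weighted_rate_def sum.distrib[symmetric] distrib_left[symmetric] by (rule sum_mono)
qed

lemma weighted_rate_mix_eq_imp_eq:
  assumes sp: "speedup_fn s B" and a: "\<forall>k\<in>{1..p}. 0 < a k"
    and \<theta>: "\<theta> \<in> allocations B p" and \<psi>: "\<psi> \<in> allocations B p" and t: "0 < t" "t < 1"
    and eq: "weighted_rate s a p \<theta> + weighted_rate s a p \<psi> =
      weighted_rate s a p (mix t \<theta> \<psi>) + weighted_rate s a p (mix t \<psi> \<theta>)"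
    and k: "k \<in> {1..p}"
  shows "\<theta> k = \<psi> k"
proof (rule ccontr)
  assume "\<theta> k \<noteq> \<psi> k"
  define d where "d k = a k * (s (mix t \<theta> \<psi> k) + s (mix t \<psi> \<theta> k) - s (\<theta> k) - s (\<psi> k))" for k
  have d_nonneg: "0 \<le> d j" if "j \<in> {1..p}" for j
  proof -
    have "s (\<theta> j) + s (\<psi> j) \<le> s (mix t \<theta> \<psi> j) + s (mix t \<psi> \<theta> j)"
      using speedup_fn_mix_ge[OF sp, of "\<theta> j" "\<psi> j" t] allocations_bounds[OF \<theta> that]
        allocations_bounds[OF \<psi> that] t
      by (auto simp: mix_def)
    moreover have "0 < a j" using a that by blast
    ultimately show ?thesis unfolding d_def by simp
  qed
  have "s (\<theta> k) + s (\<psi> k) < s (mix t \<theta> \<psi> k) + s (mix t \<psi> \<theta> k)"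
    using speedup_fn_mix_gt[OF sp _ _ \<open>\<theta> k \<noteq> \<psi> k\<close> t] allocations_bounds[OF \<theta> k]
      allocations_bounds[OF \<psi> k]
    by (auto simp: mix_def)
  moreover have "0 < a k" using a k by blast
  ultimately have "0 < d k" by (simp add: d_def)
  moreover have "(\<Sum>j=1..p. d j) = 0"
    using eq by (simp add: d_def weighted_rate_def sum_subtractf sum.distrib algebra_simps)
  ultimately show False
    using sum_nonneg_eq_0_iff[of "{1..p}" d] d_nonneg k by auto
qed

lemma weighted_rate_mix_eq_imp_agree:
  assumes sp: "speedup_fn s B" and a: "\<forall>k\<in>{1..p}. 0 < a k"
    and \<theta>: "\<theta> \<in> allocations B p" and \<psi>: "\<psi> \<in> allocations B p" and t: "0 \<le> t" "t \<le> 1"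
    and eq: "weighted_rate s a p \<theta> + weighted_rate s a p \<psi> =
      weighted_rate s a p (mix t \<theta> \<psi>) + weighted_rate s a p (mix t \<psi> \<theta>)"
  shows "(\<forall>k\<in>{1..p}. mix t \<theta> \<psi> k = \<theta> k) \<or> (\<forall>k\<in>{1..p}. mix t \<psi> \<theta> k = \<theta> k)"
proof (cases "t = 1")
  case False
  have "mix t \<theta> \<psi> k = \<theta> k" if k: "k \<in> {1..p}" for k
  proof (cases "t = 0")
    case False
    with \<open>t \<noteq> 1\<close> t have "\<theta> k = \<psi> k"
      by (intro weighted_rate_mix_eq_imp_eq[OF sp a \<theta> \<psi> _ _ eq k]) auto
    then show ?thesis by (simp add: mix_def algebra_simps)
  qed (simp add: mix_def)
  then show ?thesis by blast
qed (simp add: mix_def)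

lemma exists_mixing_weight:
  fixes S S' u v B :: real
  assumes "0 \<le> u" "0 \<le> v" "S + u + v \<le> B" "S' \<le> B"
  obtains t where "0 \<le> t" "t \<le> 1" "(1 - t) * S + t * S' + u \<le> B" "(1 - t) * S' + t * S + v \<le> B"
proof (cases "S' + u \<le> B")
  case True
  then show thesis using assms by (intro that[of 1]) auto
next
  case False
  then have "S < S'" using assms by linarith
  define t where "t = (B - S - u) / (S' - S)"
  have "t * (S' - S) = B - S - u"
    using \<open>S < S'\<close> by (simp add: t_def)
  then have "(1 - t) * S + t * S' = B - u" by (simp add: algebra_simps)
  moreover have "0 \<le> t" "t \<le> 1"
    using \<open>S < S'\<close> False assms by (auto simp: t_def field_simps)
  ultimately show thesis using assms by (intro that[of t]) (auto simp: algebra_simps)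
qed

lemma rate_eq_max_rate_of_agreeing_max:
  assumes sp: "speedup_fn s B" and "0 \<le> B" and a_pos: "\<forall>k\<in>{1..Suc p}. 0 < a k"
    and Z: "Z \<in> allocations B (Suc p)" and opt: "weighted_rate s a (Suc p) Z = max_rate s B a (Suc p)"
    and agree: "\<forall>k\<in>{1..p}. Z k = \<theta> k" and Z_last: "Z (Suc p) = u"
    and budget: "(\<Sum>k=1..p. \<theta> k) + u + v \<le> B" and "0 \<le> v"
  shows "weighted_rate s a p \<theta> + a (Suc p) * s u + a (Suc p) * s v = max_rate s B a (Suc p)"
proof -
  have "(\<Sum>k=1..p. Z k) = (\<Sum>k=1..p. \<theta> k)" using agree by simp
  moreover have "(\<Sum>k=1..Suc p. Z k) = B"
    using max_rate_full_budget[OF sp \<open>0 \<le> B\<close> _ a_pos Z opt] by simp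
  ultimately have "v = 0" using budget Z_last \<open>0 \<le> v\<close> by simp
  moreover have "weighted_rate s a p Z = weighted_rate s a p \<theta>"
    using agree by (intro weighted_rate_cong) auto
  ultimately show ?thesis
    using opt Z_last speedup_fn_zero[OF sp] by (simp add: weighted_rate_Suc)
qed

lemma exists_mixed_allocations:
  assumes \<theta>: "\<theta> \<in> allocations B (Suc (Suc p))" and \<psi>: "\<psi> \<in> allocations B p"
  obtains t where "0 \<le> t" "t \<le> 1"
    "(mix t \<theta> \<psi>)(Suc p := \<theta> (Suc p)) \<in> allocations B (Suc p)"
    "(mix t \<psi> \<theta>)(Suc p := \<theta> (Suc (Suc p))) \<in> allocations B (Suc p)"
proof -
  have \<theta>_bounds: "\<forall>k\<in>{1..p}. 0 \<le> \<theta> k" "0 \<le> \<theta> (Suc p)" "0 \<le> \<theta> (Suc (Suc p))"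
    "(\<Sum>k=1..p. \<theta> k) + \<theta> (Suc p) + \<theta> (Suc (Suc p)) \<le> B"
    using \<theta> by (auto simp: allocations_def)
  have \<psi>_bounds: "\<forall>k\<in>{1..p}. 0 \<le> \<psi> k" "(\<Sum>k=1..p. \<psi> k) \<le> B"
    using \<psi> by (auto simp: allocations_def)
  obtain t where t: "0 \<le> t" "t \<le> 1"
    "(1 - t) * (\<Sum>k=1..p. \<theta> k) + t * (\<Sum>k=1..p. \<psi> k) + \<theta> (Suc p) \<le> B"
    "(1 - t) * (\<Sum>k=1..p. \<psi> k) + t * (\<Sum>k=1..p. \<theta> k) + \<theta> (Suc (Suc p)) \<le> B"
    using exists_mixing_weight[OF \<theta>_bounds(2-4) \<psi>_bounds(2)] .
  show thesis
  proof (rule that[OF t(1,2)])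
    show "(mix t \<theta> \<psi>)(Suc p := \<theta> (Suc p)) \<in> allocations B (Suc p)"
      by (rule mix_upd_in_allocations[OF \<theta>_bounds(1) \<psi>_bounds(1) t(1,2) \<theta>_bounds(2) t(3)])
    show "(mix t \<psi> \<theta>)(Suc p := \<theta> (Suc (Suc p))) \<in> allocations B (Suc p)"
      by (rule mix_upd_in_allocations[OF \<psi>_bounds(1) \<theta>_bounds(1) t(1,2) \<theta>_bounds(3) t(4)])
  qed
qed

text \<open>Mix the first \<open>p\<close> coordinates of \<open>\<theta>\<close> with \<open>\<psi>\<close> in two complementary ways and give one of the
  two last jobs of \<open>\<theta>\<close> to each mixture: by concavity the resulting allocations \<open>X\<close>, \<open>Y\<close> of
  \<open>Suc p\<close> jobs together dominate. In the equality case strict concavity makes one of them agree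
  with \<open>\<theta>\<close>, and since a maximiser spends the whole budget, the other last job is idle.\<close>
lemma weighted_rate_repeated_coeff_bound:
  assumes sp: "speedup_fn s B" and "0 \<le> B" and a_pos: "\<forall>k\<in>{1..Suc p}. 0 < a k"
    and \<theta>: "\<theta> \<in> allocations B (Suc (Suc p))" and \<psi>: "\<psi> \<in> allocations B p"
  defines "V \<equiv> weighted_rate s a p \<theta> + a (Suc p) * s (\<theta> (Suc p)) + a (Suc p) * s (\<theta> (Suc (Suc p)))"
  shows "V + weighted_rate s a p \<psi> < 2 * max_rate s B a (Suc p) \<or> V = max_rate s B a (Suc p)"
proof -
  define u where "u = \<theta> (Suc p)"
  define v where "v = \<theta> (Suc (Suc p))"
  have \<theta>_p: "\<theta> \<in> allocations B p" using allocations_Suc_D[OF allocations_Suc_D[OF \<theta>]] .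
  have uv: "0 \<le> u" "0 \<le> v" "(\<Sum>k=1..p. \<theta> k) + u + v \<le> B"
    using \<theta> by (auto simp: allocations_def u_def v_def)
  obtain t where t: "0 \<le> t" "t \<le> 1" and mixed:
    "(mix t \<theta> \<psi>)(Suc p := u) \<in> allocations B (Suc p)" "(mix t \<psi> \<theta>)(Suc p := v) \<in> allocations B (Suc p)"
    using exists_mixed_allocations[OF \<theta> \<psi>] unfolding u_def v_def .
  define X where "X = (mix t \<theta> \<psi>)(Suc p := u)"
  define Y where "Y = (mix t \<psi> \<theta>)(Suc p := v)"
  have X: "X \<in> allocations B (Suc p)" and Y: "Y \<in> allocations B (Suc p)"
    using mixed by (simp_all add: X_def Y_def)
  have X_le: "weighted_rate s a (Suc p) X \<le> max_rate s B a (Suc p)"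
    and Y_le: "weighted_rate s a (Suc p) Y \<le> max_rate s B a (Suc p)"
    using weighted_rate_le_max_rate[OF sp \<open>0 \<le> B\<close>] X Y by auto
  have XY: "weighted_rate s a (Suc p) X + weighted_rate s a (Suc p) Y =
      weighted_rate s a p (mix t \<theta> \<psi>) + weighted_rate s a p (mix t \<psi> \<theta>) + a (Suc p) * s u + a (Suc p) * s v"
    unfolding X_def Y_def weighted_rate_fun_upd_Suc by simp
  have mix_ge: "weighted_rate s a p \<theta> + weighted_rate s a p \<psi> \<le>
      weighted_rate s a p (mix t \<theta> \<psi>) + weighted_rate s a p (mix t \<psi> \<theta>)"
    using a_pos by (intro weighted_rate_mix_ge[OF sp _ \<theta>_p \<psi> t(1,2)]) (auto intro: less_imp_le)
  show ?thesis
  proof (rule disjCI)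
    assume "V \<noteq> max_rate s B a (Suc p)"
    show "V + weighted_rate s a p \<psi> < 2 * max_rate s B a (Suc p)"
    proof (rule ccontr)
      assume "\<not> ?thesis"
      then have X_opt: "weighted_rate s a (Suc p) X = max_rate s B a (Suc p)"
        and Y_opt: "weighted_rate s a (Suc p) Y = max_rate s B a (Suc p)"
        and eq: "weighted_rate s a p \<theta> + weighted_rate s a p \<psi> =
          weighted_rate s a p (mix t \<theta> \<psi>) + weighted_rate s a p (mix t \<psi> \<theta>)"
        using X_le Y_le XY mix_ge unfolding V_def u_def v_def by linarith+
      have "(\<forall>k\<in>{1..p}. mix t \<theta> \<psi> k = \<theta> k) \<or> (\<forall>k\<in>{1..p}. mix t \<psi> \<theta> k = \<theta> k)"
        using a_pos by (intro weighted_rate_mix_eq_imp_agree[OF sp _ \<theta>_p \<psi> t(1,2) eq]) auto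
      then have "V = max_rate s B a (Suc p)"
      proof (elim disjE)
        assume "\<forall>k\<in>{1..p}. mix t \<theta> \<psi> k = \<theta> k"
        then show ?thesis
          using rate_eq_max_rate_of_agreeing_max[OF sp \<open>0 \<le> B\<close> a_pos X X_opt, of \<theta> u v] uv
          by (simp add: X_def V_def u_def v_def)
      next
        assume "\<forall>k\<in>{1..p}. mix t \<psi> \<theta> k = \<theta> k"
        then show ?thesis
          using rate_eq_max_rate_of_agreeing_max[OF sp \<open>0 \<le> B\<close> a_pos Y Y_opt, of \<theta> v u] uv
          by (simp add: Y_def V_def u_def v_def algebra_simps)
      qed
      with \<open>V \<noteq> max_rate s B a (Suc p)\<close> show False ..
    qed
  qed
qed

text \<open>The value \<open>a 0 = 0\<close> is a sentinel that lets the construction start at \<open>m = 0\<close>.\<close>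
definition balancing_coeffs ::
  "(real \<Rightarrow> real) \<Rightarrow> real \<Rightarrow> (nat \<Rightarrow> real) \<Rightarrow> (nat \<Rightarrow> real) \<Rightarrow> nat \<Rightarrow> bool" where
  "balancing_coeffs s B w a M \<longleftrightarrow>
     a 0 = 0 \<and> strict_mono_on {0..M} a \<and> (\<forall>m\<le>M. max_rate s B a m = (\<Sum>k=1..m. w k))"

lemma balancing_coeffs_pos: "balancing_coeffs s B w a M \<Longrightarrow> k \<in> {1..M} \<Longrightarrow> 0 < a k"
  unfolding balancing_coeffs_def by (metis atLeastAtMost_iff le0 strict_mono_onD zero_less_one less_le_trans)

lemma weighted_rate_repeated_coeff_less:
  assumes sp: "speedup_fn s B" and "0 \<le> B" and bal: "balancing_coeffs s B w a m"
    and w_pos: "\<forall>k\<in>{1..Suc m}. 0 < w k" and w_mono: "1 \<le> m \<longrightarrow> w m \<le> w (Suc m)"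
    and \<theta>: "\<theta> \<in> allocations B (Suc m)"
  shows "weighted_rate s (a(Suc m := a m)) (Suc m) \<theta> < (\<Sum>k=1..Suc m. w k)"
proof (cases m)
  case 0
  then show ?thesis using bal w_pos by (simp add: balancing_coeffs_def weighted_rate_def)
next
  case (Suc p)
  have max_rate: "max_rate s B a p = (\<Sum>k=1..p. w k)" "max_rate s B a (Suc p) = (\<Sum>k=1..Suc p. w k)"
    using bal Suc by (auto simp: balancing_coeffs_def)
  obtain \<psi> where \<psi>: "\<psi> \<in> allocations B p" "weighted_rate s a p \<psi> = (\<Sum>k=1..p. w k)"
    using max_rate_attained[OF sp \<open>0 \<le> B\<close>] max_rate(1) by metis
  have "weighted_rate s (a(Suc m := a m)) p \<theta> = weighted_rate s a p \<theta>"
    using Suc by (intro weighted_rate_cong) auto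
  then have "weighted_rate s (a(Suc m := a m)) (Suc m) \<theta> =
      weighted_rate s a p \<theta> + a (Suc p) * s (\<theta> (Suc p)) + a (Suc p) * s (\<theta> (Suc (Suc p)))"
    using Suc by (simp add: weighted_rate_Suc)
  moreover have "\<forall>k\<in>{1..Suc p}. 0 < a k" using balancing_coeffs_pos[OF bal] Suc by blast
  moreover have "w (Suc p) \<le> w (Suc (Suc p))" "0 < w (Suc (Suc p))" using w_mono w_pos Suc by auto
  \<comment> \<open>Twice the maximum for \<open>Suc p\<close> jobs minus the one for \<open>p\<close> jobs is
    \<open>w 1 + \<dots> + w (Suc p) + w (Suc p)\<close>, which does not exceed \<open>w 1 + \<dots> + w (Suc (Suc p))\<close>.\<close>
  ultimately show ?thesis
    using weighted_rate_repeated_coeff_bound[OF sp \<open>0 \<le> B\<close> _ \<theta>[unfolded Suc] \<psi>(1)] \<psi>(2) max_rate Suc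
    by fastforce
qed

lemma max_rate_fun_upd_le:
  assumes sp: "speedup_fn s B" and "0 \<le> B" and j: "j \<in> {1..m}"
  shows "max_rate s B (a(j := \<alpha>)) m \<le> max_rate s B (a(j := \<beta>)) m + \<bar>\<alpha> - \<beta>\<bar> * s B"
proof -
  obtain \<theta> where \<theta>: "\<theta> \<in> allocations B m" "weighted_rate s (a(j := \<alpha>)) m \<theta> = max_rate s B (a(j := \<alpha>)) m"
    using max_rate_attained[OF sp \<open>0 \<le> B\<close>] by metis
  have "weighted_rate s (a(j := \<alpha>)) m \<theta> = weighted_rate s (a(j := \<beta>)) m \<theta> + (\<alpha> - \<beta>) * s (\<theta> j)"
    using weighted_rate_coeff_upd[OF j, of s a \<alpha> \<theta>] weighted_rate_coeff_upd[OF j, of s a \<beta> \<theta>]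
    by (simp add: algebra_simps)
  also have "\<dots> \<le> max_rate s B (a(j := \<beta>)) m + \<bar>\<alpha> - \<beta>\<bar> * s B"
  proof (rule add_mono)
    show "weighted_rate s (a(j := \<beta>)) m \<theta> \<le> max_rate s B (a(j := \<beta>)) m"
      by (rule weighted_rate_le_max_rate[OF sp \<open>0 \<le> B\<close> \<theta>(1)])
    have "0 \<le> s (\<theta> j)" "s (\<theta> j) \<le> s B"
      using allocations_bounds[OF \<theta>(1) j] speedup_fn_nonneg[OF sp] speedup_fn_le[OF sp] by auto
    then show "(\<alpha> - \<beta>) * s (\<theta> j) \<le> \<bar>\<alpha> - \<beta>\<bar> * s B"
      by (meson abs_ge_self abs_ge_zero mult_mono order_trans)
  qed
  finally show ?thesis using \<theta>(2) by simp
qed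

lemma continuous_max_rate_fun_upd:
  assumes sp: "speedup_fn s B" and "0 \<le> B" and j: "j \<in> {1..m}"
  shows "continuous_on UNIV (\<lambda>\<alpha>. max_rate s B (a(j := \<alpha>)) m)"
proof -
  have "(s B)-lipschitz_on UNIV (\<lambda>\<alpha>. max_rate s B (a(j := \<alpha>)) m)"
  proof (rule lipschitz_onI)
    fix \<alpha> \<beta> :: real
    show "dist (max_rate s B (a(j := \<alpha>)) m) (max_rate s B (a(j := \<beta>)) m) \<le> s B * dist \<alpha> \<beta>"
      using max_rate_fun_upd_le[OF assms, of a \<alpha> \<beta>] max_rate_fun_upd_le[OF assms, of a \<beta> \<alpha>]
      by (simp add: dist_real_def abs_le_iff abs_minus_commute algebra_simps)
  qed (use speedup_fn_nonneg[OF sp \<open>0 \<le> B\<close>] in simp)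
  then show ?thesis by (rule lipschitz_on_continuous_on)
qed

lemma exists_last_coeff_max_rate_eq:
  assumes sp: "speedup_fn s B" and B: "0 < B" and lo: "max_rate s B (a(Suc m := c)) (Suc m) < W"
  obtains \<alpha> where "c < \<alpha>" "max_rate s B (a(Suc m := \<alpha>)) (Suc m) = W"
proof -
  define G where "G \<alpha> = max_rate s B (a(Suc m := \<alpha>)) (Suc m)" for \<alpha>
  define hi where "hi = max c (W / s B)"
  have "0 \<le> B" using B by simp
  have "0 < s B" using speedup_fn_pos[OF sp B] by simp
  have G_hi: "W \<le> G hi"
  proof -
    define \<phi> where "\<phi> = (\<lambda>k::nat. 0::real)(Suc m := B)"
    have "\<phi> \<in> allocations B (Suc m)" using B by (simp add: \<phi>_def allocations_def)
    then have "weighted_rate s (a(Suc m := hi)) (Suc m) \<phi> \<le> G hi"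
      unfolding G_def by (rule weighted_rate_le_max_rate[OF sp \<open>0 \<le> B\<close>])
    moreover have "weighted_rate s (a(Suc m := hi)) (Suc m) \<phi> = hi * s B"
      using speedup_fn_zero[OF sp] by (simp add: \<phi>_def weighted_rate_fun_upd_Suc weighted_rate_def)
    moreover have "W / s B \<le> hi" by (simp add: hi_def)
    then have "W \<le> hi * s B" using \<open>0 < s B\<close> by (simp add: divide_le_eq)
    ultimately show ?thesis by simp
  qed
  have "continuous_on {c..hi} G"
    unfolding G_def using continuous_max_rate_fun_upd[OF sp \<open>0 \<le> B\<close>, of "Suc m" "Suc m" a]
    by (auto intro: continuous_on_subset)
  then obtain \<alpha> where \<alpha>: "c \<le> \<alpha>" "G \<alpha> = W"
    using IVT'[of G c W hi] lo G_hi by (force simp: hi_def G_def)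
  moreover have "\<alpha> \<noteq> c" using \<alpha>(2) lo by (auto simp: G_def)
  ultimately show thesis using that[of \<alpha>] by (simp add: G_def)
qed

lemma balancing_coeffs_Suc:
  assumes sp: "speedup_fn s B" and B: "0 < B" and bal: "balancing_coeffs s B w a m"
    and w_pos: "\<forall>k\<in>{1..Suc m}. 0 < w k" and w_mono: "1 \<le> m \<longrightarrow> w m \<le> w (Suc m)"
  obtains \<alpha> where "a m < \<alpha>" "balancing_coeffs s B w (a(Suc m := \<alpha>)) (Suc m)"
proof -
  have "0 \<le> B" using B by simp
  obtain \<theta> where "\<theta> \<in> allocations B (Suc m)"
    "weighted_rate s (a(Suc m := a m)) (Suc m) \<theta> = max_rate s B (a(Suc m := a m)) (Suc m)"
    using max_rate_attained[OF sp \<open>0 \<le> B\<close>] by metis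
  then have "max_rate s B (a(Suc m := a m)) (Suc m) < (\<Sum>k=1..Suc m. w k)"
    using weighted_rate_repeated_coeff_less[OF sp \<open>0 \<le> B\<close> bal w_pos w_mono] by metis
  then obtain \<alpha> where \<alpha>: "a m < \<alpha>" "max_rate s B (a(Suc m := \<alpha>)) (Suc m) = (\<Sum>k=1..Suc m. w k)"
    using exists_last_coeff_max_rate_eq[OF sp B] by metis
  have "strict_mono_on {0..Suc m} (a(Suc m := \<alpha>))"
  proof (rule strict_mono_onI)
    fix i j assume ij: "i \<in> {0..Suc m}" "j \<in> {0..Suc m}" "i < j"
    have a_mono: "strict_mono_on {0..m} a" using bal by (simp add: balancing_coeffs_def)
    show "(a(Suc m := \<alpha>)) i < (a(Suc m := \<alpha>)) j"
    proof (cases "j = Suc m")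
      case True
      then have "a i \<le> a m"
        using ij strict_mono_onD[OF a_mono, of i m] by (cases "i = m") auto
      then show ?thesis using True ij \<alpha>(1) by simp
    next
      case False
      then show ?thesis using ij strict_mono_onD[OF a_mono, of i j] by simp
    qed
  qed
  moreover have "max_rate s B (a(Suc m := \<alpha>)) k = (\<Sum>i=1..k. w i)" if "k \<le> Suc m" for k
  proof (cases "k = Suc m")
    case False
    then have "max_rate s B (a(Suc m := \<alpha>)) k = max_rate s B a k"
      using that by (intro max_rate_cong) auto
    then show ?thesis using bal that False by (simp add: balancing_coeffs_def)
  qed (use \<alpha>(2) in simp)
  ultimately have "balancing_coeffs s B w (a(Suc m := \<alpha>)) (Suc m)"
    using bal by (simp add: balancing_coeffs_def)
  with \<alpha>(1) show thesis by (rule that)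
qed

lemma balancing_coeffs_exist:
  assumes sp: "speedup_fn s B" and B: "0 < B"
    and w_pos: "\<forall>i\<in>{1..M}. 0 < w i" and w_mono: "mono_on {1..M} w"
  obtains a where "balancing_coeffs s B w a M"
proof -
  have "\<exists>a. balancing_coeffs s B w a m" if "m \<le> M" for m
    using that
  proof (induction m)
    case 0
    have "max_rate s B (\<lambda>_. 0) 0 = 0"
      using B by (auto simp: max_rate_def weighted_rate_def allocations_def)
    then show ?case by (intro exI[of _ "\<lambda>_. 0"]) (auto simp: balancing_coeffs_def strict_mono_on_def)
  next
    case (Suc m)
    then obtain a where "balancing_coeffs s B w a m" by auto
    moreover have "\<forall>k\<in>{1..Suc m}. 0 < w k" "1 \<le> m \<longrightarrow> w m \<le> w (Suc m)"
      using w_pos mono_onD[OF w_mono] Suc.prems by auto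
    ultimately show ?case using balancing_coeffs_Suc[OF sp B] by metis
  qed
  then show thesis using that by blast
qed

section \<open>The lower bound\<close>

lemma sum_initial_segment_le:
  fixes f :: "nat \<Rightarrow> real"
  assumes mono: "mono_on {1..M} f" and S: "S \<subseteq> {1..M}"
  shows "(\<Sum>k=1..card S. f k) \<le> sum f S"
proof (cases "card S = 0")
  case True
  then show ?thesis using finite_subset[OF S] by simp
next
  case False
  define n where "n = card S"
  define P where "P = {1..n}"
  have fin: "finite S" using finite_subset[OF S] by simp
  have n: "n \<in> {1..M}" using False card_mono[OF _ S] by (simp add: n_def)
  have "card S = card (S \<inter> P) + card (S - P)" "card P = card (P \<inter> S) + card (P - S)"
    using card_Int_Diff[OF fin] card_Int_Diff[of P S] by (simp_all add: P_def)
  then have card_eq: "card (S - P) = card (P - S)" by (simp add: P_def n_def Int_commute)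
  have "real (card (S - P)) * f n \<le> sum f (S - P)"
  proof (rule sum_bounded_below)
    fix k assume "k \<in> S - P"
    then have "k \<in> {1..M}" "n \<le> k" using S by (auto simp: P_def)
    then show "f n \<le> f k" using mono_onD[OF mono n] by blast
  qed
  moreover have "sum f (P - S) \<le> real (card (P - S)) * f n"
  proof (rule sum_bounded_above)
    fix k assume "k \<in> P - S"
    then have "k \<in> {1..M}" "k \<le> n" using n by (auto simp: P_def)
    then show "f k \<le> f n" using mono_onD[OF mono _ n] by blast
  qed
  moreover have "sum f S = sum f (S \<inter> P) + sum f (S - P)" "sum f P = sum f (P \<inter> S) + sum f (P - S)"
    using fin by (simp_all add: P_def sum.Int_Diff)
  ultimately have "sum f P \<le> sum f S" using card_eq by (simp add: Int_commute)
  then show ?thesis by (simp add: P_def n_def)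
qed

lemma sum_by_parts:
  fixes b x :: "nat \<Rightarrow> real"
  shows "(\<Sum>j=1..M. b j * x j) =
    (\<Sum>n=1..M. (x n - x (Suc n)) * (\<Sum>j=1..n. b j)) + x (Suc M) * (\<Sum>j=1..M. b j)"
  by (induction M) (simp_all add: algebra_simps)

lemma rearrangement_le:
  fixes a x :: "nat \<Rightarrow> real"
  assumes a_mono: "mono_on {1..M} a" and x_mono: "antimono_on {1..M} x"
    and x_nonneg: "\<forall>i\<in>{1..M}. 0 \<le> x i"
    and \<pi>: "inj_on \<pi> {1..M}" "\<pi> ` {1..M} \<subseteq> {1..M}"
  shows "(\<Sum>k=1..M. a k * x k) \<le> (\<Sum>j=1..M. a (\<pi> j) * x j)"
proof -
  define x' where "x' = x(Suc M := 0)"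
  have "(\<Sum>n=1..M. (x' n - x' (Suc n)) * (\<Sum>j=1..n. a j)) \<le>
      (\<Sum>n=1..M. (x' n - x' (Suc n)) * (\<Sum>j=1..n. a (\<pi> j)))"
  proof (rule sum_mono)
    fix n assume n: "n \<in> {1..M}"
    have "0 \<le> x' n - x' (Suc n)"
      using monotone_onD[OF x_mono, of n "Suc n"] x_nonneg n by (cases "n = M") (auto simp: x'_def)
    moreover have "(\<Sum>j=1..n. a j) \<le> (\<Sum>j=1..n. a (\<pi> j))"
    proof -
      have inj: "inj_on \<pi> {1..n}" using \<pi>(1) n by (auto intro: inj_on_subset)
      then have "(\<Sum>j=1..n. a (\<pi> j)) = sum a (\<pi> ` {1..n})" by (simp add: sum.reindex)
      moreover have "card (\<pi> ` {1..n}) = n" using card_image[OF inj] by simp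
      moreover have "\<pi> ` {1..n} \<subseteq> {1..M}" using \<pi>(2) n by auto
      ultimately show ?thesis using sum_initial_segment_le[OF a_mono, of "\<pi> ` {1..n}"] by simp
    qed
    ultimately show "(x' n - x' (Suc n)) * (\<Sum>j=1..n. a j) \<le> (x' n - x' (Suc n)) * (\<Sum>j=1..n. a (\<pi> j))"
      by (rule mult_left_mono[rotated])
  qed
  moreover have "(\<Sum>k=1..M. a k * x k) = (\<Sum>k=1..M. a k * x' k)"
    "(\<Sum>j=1..M. a (\<pi> j) * x j) = (\<Sum>j=1..M. a (\<pi> j) * x' j)"
    by (auto simp: x'_def intro: sum.cong)
  ultimately show ?thesis
    using sum_by_parts[of a x' M] sum_by_parts[of "\<lambda>j. a (\<pi> j)" x' M] by (simp add: x'_def)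
qed

text \<open>Jobs are ranked by decreasing completion time (ties broken by index), so rank \<open>1\<close> is the
  job that finishes last and the jobs still running at any time hold the ranks \<open>1, 2, \<dots>\<close>.\<close>

definition finishes_before :: "(nat \<Rightarrow> real) \<Rightarrow> nat \<Rightarrow> nat \<Rightarrow> bool" where
  "finishes_before T j i \<longleftrightarrow> T j < T i \<or> (T j = T i \<and> i < j)"

definition completion_rank :: "(nat \<Rightarrow> real) \<Rightarrow> nat \<Rightarrow> nat \<Rightarrow> nat" where
  "completion_rank T M j = Suc (card {i\<in>{1..M}. finishes_before T j i})"

lemma completion_rank_less:
  assumes "i \<in> {1..M}" "finishes_before T j i"
  shows "completion_rank T M i < completion_rank T M j"
proof -
  have "insert i {k\<in>{1..M}. finishes_before T i k} \<subseteq> {k\<in>{1..M}. finishes_before T j k}"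
    using assms unfolding finishes_before_def by auto
  then have "card (insert i {k\<in>{1..M}. finishes_before T i k}) \<le> card {k\<in>{1..M}. finishes_before T j k}"
    by (intro card_mono) simp_all
  moreover have "i \<notin> {k\<in>{1..M}. finishes_before T i k}" by (simp add: finishes_before_def)
  ultimately show ?thesis by (simp add: completion_rank_def)
qed

lemma completion_rank_inj: "inj_on (completion_rank T M) {1..M}"
proof (rule inj_onI, rule ccontr)
  fix i j assume ij: "i \<in> {1..M}" "j \<in> {1..M}" "completion_rank T M i = completion_rank T M j" "i \<noteq> j"
  then have "finishes_before T j i \<or> finishes_before T i j" by (auto simp: finishes_before_def)
  then show False using completion_rank_less[of i M T j] completion_rank_less[of j M T i] ij by auto
qed

lemma completion_rank_bij_betw:
  assumes A: "A \<subseteq> {1..M}" and up: "\<forall>j\<in>A. \<forall>i\<in>{1..M}. T j \<le> T i \<longrightarrow> i \<in> A"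
  shows "bij_betw (completion_rank T M) A {1..card A}"
proof -
  have fin: "finite A" using A finite_subset by blast
  have inj: "inj_on (completion_rank T M) A" using completion_rank_inj A by (rule inj_on_subset)
  have "completion_rank T M ` A \<subseteq> {1..card A}"
  proof
    fix r assume "r \<in> completion_rank T M ` A"
    then obtain j where j: "j \<in> A" "r = completion_rank T M j" by blast
    have "{i\<in>{1..M}. finishes_before T j i} \<subseteq> A - {j}"
      using up j(1) by (auto simp: finishes_before_def)
    then have "card {i\<in>{1..M}. finishes_before T j i} \<le> card (A - {j})"
      using fin by (intro card_mono) auto
    then have "card {i\<in>{1..M}. finishes_before T j i} \<le> card A - 1"
      using fin j(1) by simp
    moreover have "1 \<le> card A" using j(1) fin card_gt_0_iff[of A] by force
    ultimately show "r \<in> {1..card A}" by (simp add: j(2) completion_rank_def)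
  qed
  moreover have "card (completion_rank T M ` A) = card A" using card_image[OF inj] .
  ultimately have "completion_rank T M ` A = {1..card A}" by (intro card_subset_eq) auto
  then show ?thesis using inj by (simp add: bij_betw_def)
qed

lemma ranked_rate_le_active_weight:
  assumes sp: "speedup_fn s B" and "0 \<le> B" and bal: "balancing_coeffs s B w a M"
    and w_mono: "mono_on {1..M} w"
    and nonneg: "\<forall>j\<in>{1..M}. 0 \<le> \<theta> j" and idle: "\<forall>j\<in>{1..M}. T j < t \<longrightarrow> \<theta> j = 0"
    and budget: "(\<Sum>j=1..M. \<theta> j) \<le> B"
  shows "(\<Sum>j=1..M. a (completion_rank T M j) * s (\<theta> j)) \<le> (\<Sum>j\<in>{j\<in>{1..M}. t \<le> T j}. w j)"
proof -
  define A where "A = {j\<in>{1..M}. t \<le> T j}"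
  define r where "r = completion_rank T M"
  define m where "m = card A"
  define \<phi> where "\<phi> k = \<theta> (inv_into A r k)" for k
  have A: "A \<subseteq> {1..M}" by (auto simp: A_def)
  have bij: "bij_betw r A {1..m}"
    unfolding r_def m_def by (rule completion_rank_bij_betw) (auto simp: A_def)
  have \<phi>_r: "\<phi> (r j) = \<theta> j" if "j \<in> A" for j
    using bij that by (simp add: \<phi>_def bij_betw_def)
  have \<phi>_sum: "(\<Sum>k=1..m. \<phi> k) = (\<Sum>j\<in>A. \<theta> j)"
    using sum.reindex_bij_betw[OF bij, of \<phi>] \<phi>_r by simp
  have "a (r j) * s (\<theta> j) = 0" if "j \<in> {1..M} - A" for j
    using that idle speedup_fn_zero[OF sp] by (auto simp: A_def)
  then have "(\<Sum>j=1..M. a (r j) * s (\<theta> j)) = (\<Sum>j\<in>A. a (r j) * s (\<theta> j))"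
    by (intro sum.mono_neutral_right[OF _ A]) auto
  also have "\<dots> = (\<Sum>j\<in>A. a (r j) * s (\<phi> (r j)))" by (rule sum.cong) (simp_all add: \<phi>_r)
  also have "\<dots> = weighted_rate s a m \<phi>"
    unfolding weighted_rate_def by (rule sum.reindex_bij_betw[OF bij])
  also have "\<dots> \<le> max_rate s B a m"
  proof (rule weighted_rate_le_max_rate[OF sp \<open>0 \<le> B\<close>])
    have "(\<Sum>j\<in>A. \<theta> j) \<le> (\<Sum>j=1..M. \<theta> j)" using A nonneg by (intro sum_mono2) auto
    then have "(\<Sum>k=1..m. \<phi> k) \<le> B" using budget \<phi>_sum by simp
    moreover have "0 \<le> \<phi> k" if "k \<in> {1..m}" for k
    proof -
      have "inv_into A r k \<in> A" using bij that by (metis bij_betw_def inv_into_into)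
      then show ?thesis using A nonneg by (auto simp: \<phi>_def)
    qed
    ultimately show "\<phi> \<in> allocations B m" by (simp add: allocations_def)
  qed
  also have "\<dots> = (\<Sum>k=1..m. w k)"
    using bal card_mono[OF _ A] by (simp add: balancing_coeffs_def m_def)
  also have "\<dots> \<le> (\<Sum>j\<in>A. w j)"
    unfolding m_def by (rule sum_initial_segment_le[OF w_mono A])
  finally show ?thesis by (simp add: A_def r_def)
qed

lemma has_integral_extend_by_zero:
  fixes f :: "real \<Rightarrow> real"
  assumes f: "(f has_integral I) {0..c}" and "c \<le> d" and zero: "\<forall>t>c. f t = 0"
  shows "(f has_integral I) {0..d}"
proof -
  have "((\<lambda>t. if t \<in> {0..c} then f t else 0) has_integral I) {0..d}"
    using has_integral_restrict_closed_subinterval[of f I 0 c 0 d] f \<open>c \<le> d\<close> by simp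
  moreover have "(if t \<in> {0..c} then f t else 0) = f t" if "t \<in> {0..d}" for t
    using that zero by auto
  then have "((\<lambda>t. if t \<in> {0..c} then f t else 0) has_integral I) {0..d} = (f has_integral I) {0..d}"
    by (rule has_integral_cong)
  ultimately show ?thesis by simp
qed

lemma has_integral_step:
  fixes c d y :: real
  assumes "0 \<le> c" "c \<le> d"
  shows "((\<lambda>t. if t \<le> c then y else 0) has_integral (y * c)) {0..d}"
proof (rule has_integral_extend_by_zero[OF _ \<open>c \<le> d\<close>])
  show "((\<lambda>t. if t \<le> c then y else 0) has_integral (y * c)) {0..c}"
    using has_integral_const_real[of y 0 c] \<open>0 \<le> c\<close>
    by (subst has_integral_cong[of _ _ "\<lambda>_. y"]) (auto simp: mult.commute)
qed simp

lemma feasible_schedule_service_has_integral: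
  assumes sp: "speedup_fn s B" and feasible: "feasible_schedule M B s x \<theta> T"
    and j: "j \<in> {1..M}" and "T j \<le> d"
  shows "((\<lambda>t. s (\<theta> j t)) has_integral x j) {0..d}"
proof (rule has_integral_extend_by_zero[OF _ \<open>T j \<le> d\<close>])
  show "((\<lambda>t. s (\<theta> j t)) has_integral x j) {0..T j}" "\<forall>t>T j. s (\<theta> j t) = 0"
    using feasible j speedup_fn_zero[OF sp] by (auto simp: feasible_schedule_def has_integral_iff)
qed

lemma feasible_schedule_ranked_cost_le:
  assumes sp: "speedup_fn s B" and "0 \<le> B" and bal: "balancing_coeffs s B w a M"
    and w_mono: "mono_on {1..M} w" and feasible: "feasible_schedule M B s x \<theta> T"
  shows "(\<Sum>j=1..M. a (completion_rank T M j) * x j) \<le> (\<Sum>j=1..M. w j * T j)"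
proof -
  define r where "r = completion_rank T M"
  define Tmax where "Tmax = Max (insert 0 (T ` {1..M}))"
  have T_le: "T j \<le> Tmax" if "j \<in> {1..M}" for j
    unfolding Tmax_def using that by (intro Max_ge) auto
  define F where "F t = (\<Sum>j=1..M. a (r j) * s (\<theta> j t))" for t
  define H where "H t = (\<Sum>j=1..M. if t \<le> T j then w j else 0)" for t
  have "(F has_integral (\<Sum>j=1..M. a (r j) * x j)) {0..Tmax}"
    unfolding F_def using feasible_schedule_service_has_integral[OF sp feasible _ T_le]
    by (intro has_integral_sum has_integral_mult_right) auto
  \<comment> \<open>The schedule is unconstrained at \<open>t = 0\<close>, so \<open>F 0\<close> is modified there.\<close>
  then have F': "((\<lambda>t. if t = 0 then H 0 else F t) has_integral (\<Sum>j=1..M. a (r j) * x j)) {0..Tmax}"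
    by (rule has_integral_spike_finite[of "{0}", rotated 2]) auto
  have "(H has_integral (\<Sum>j=1..M. w j * T j)) {0..Tmax}"
    unfolding H_def using feasible T_le
    by (intro has_integral_sum has_integral_step) (auto simp: feasible_schedule_def)
  moreover have "(if t = 0 then H 0 else F t) \<le> H t" if "t \<in> {0..Tmax}" for t
  proof (cases "t = 0")
    case False
    then have "0 < t" using that by simp
    then have "F t \<le> (\<Sum>j\<in>{j\<in>{1..M}. t \<le> T j}. w j)"
      unfolding F_def r_def using feasible
      by (intro ranked_rate_le_active_weight[OF sp \<open>0 \<le> B\<close> bal w_mono])
        (auto simp: feasible_schedule_def)
    also have "\<dots> = H t" unfolding H_def by (rule sum.inter_filter) simp
    finally show ?thesis using False by simp
  qed simp
  ultimately show ?thesis using has_integral_le[OF F'] by (simp add: r_def)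
qed

lemma feasible_schedule_cost_ge:
  assumes sp: "speedup_fn s B" and "0 \<le> B" and bal: "balancing_coeffs s B w a M"
    and w_mono: "mono_on {1..M} w"
    and x_nonneg: "\<forall>i\<in>{1..M}. 0 \<le> x i" and x_mono: "antimono_on {1..M} x"
    and feasible: "feasible_schedule M B s x \<theta> T"
  shows "(\<Sum>i=1..M. a i * x i) \<le> (\<Sum>i=1..M. w i * T i)"
proof -
  have "mono_on {1..M} a"
    using bal by (auto simp: balancing_coeffs_def strict_mono_on_def mono_on_def le_less)
  moreover have "completion_rank T M ` {1..M} \<subseteq> {1..M}"
    using completion_rank_bij_betw[of "{1..M}" M T] by (simp add: bij_betw_def)
  ultimately have "(\<Sum>i=1..M. a i * x i) \<le> (\<Sum>j=1..M. a (completion_rank T M j) * x j)"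
    using x_mono x_nonneg completion_rank_inj by (intro rearrangement_le) auto
  also have "\<dots> \<le> (\<Sum>i=1..M. w i * T i)"
    by (rule feasible_schedule_ranked_cost_le[OF sp \<open>0 \<le> B\<close> bal w_mono feasible])
  finally show ?thesis .
qed

section \<open>An optimal schedule\<close>

text \<open>The lengths \<open>\<tau> l\<close> of the phases during which exactly the jobs \<open>1..l\<close> are present, when job
  \<open>i\<close> is served at rate \<open>\<sigma> l i\<close> in phase \<open>l\<close>: the triangular system
  \<open>\<Sum>l=i..M. \<sigma> l i * \<tau> l = x i\<close> is solved from \<open>i = M\<close> downwards.\<close>
function phase_length :: "nat \<Rightarrow> (nat \<Rightarrow> real) \<Rightarrow> (nat \<Rightarrow> nat \<Rightarrow> real) \<Rightarrow> nat \<Rightarrow> real" where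
  "phase_length M x \<sigma> i =
     (if i = 0 \<or> M < i then 0
      else (x i - (\<Sum>l\<in>{Suc i..M}. \<sigma> l i * phase_length M x \<sigma> l)) / \<sigma> i i)"
  by pat_completeness auto
termination by (relation "Wellfounded.measure (\<lambda>(M, x, \<sigma>, i). Suc M - i)") auto

declare phase_length.simps [simp del]

lemma phase_length_solves:
  assumes "i \<in> {1..M}" "\<sigma> i i \<noteq> 0"
  shows "(\<Sum>l=i..M. \<sigma> l i * phase_length M x \<sigma> l) = x i"
proof -
  have "(\<Sum>l=i..M. \<sigma> l i * phase_length M x \<sigma> l) =
      \<sigma> i i * phase_length M x \<sigma> i + (\<Sum>l=Suc i..M. \<sigma> l i * phase_length M x \<sigma> l)"
    using assms(1) by (simp add: sum.atLeast_Suc_atMost)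
  also have "\<sigma> i i * phase_length M x \<sigma> i = x i - (\<Sum>l=Suc i..M. \<sigma> l i * phase_length M x \<sigma> l)"
    using assms by (subst phase_length.simps) simp
  finally show ?thesis by simp
qed

text \<open>Nonnegativity needs the rates of each phase to increase with the job index: then the service
  that the later phases give job \<open>i\<close> is at most what they give job \<open>i + 1\<close>, which is at most
  \<open>x (i + 1) \<le> x i\<close>.\<close>
lemma phase_length_nonneg:
  assumes x_nonneg: "\<forall>i\<in>{1..M}. 0 \<le> x i" and x_mono: "antimono_on {1..M} x"
    and \<sigma>_mono: "\<forall>l\<in>{1..M}. \<forall>i\<in>{1..<l}. \<sigma> l i \<le> \<sigma> l (Suc i)"
    and \<sigma>_pos: "\<forall>l\<in>{1..M}. 0 < \<sigma> l l"
  shows "0 \<le> phase_length M x \<sigma> i"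
proof (induction i rule: measure_induct_rule[where f="\<lambda>i. Suc M - i"])
  case (less i)
  show ?case
  proof (cases "i = 0 \<or> M < i")
    case True
    then show ?thesis by (subst phase_length.simps) simp
  next
    case False
    have "(\<Sum>l=Suc i..M. \<sigma> l i * phase_length M x \<sigma> l) \<le> x i"
    proof (cases "i = M")
      case True
      then show ?thesis using x_nonneg False by simp
    next
      case False
      with \<open>\<not> (i = 0 \<or> M < i)\<close> have i: "i \<in> {1..M}" "Suc i \<in> {1..M}" by auto
      have "(\<Sum>l=Suc i..M. \<sigma> l i * phase_length M x \<sigma> l) \<le>
          (\<Sum>l=Suc i..M. \<sigma> l (Suc i) * phase_length M x \<sigma> l)"
        using \<sigma>_mono i less.IH by (intro sum_mono mult_right_mono) auto
      also have "\<dots> = x (Suc i)"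
        using bspec[OF \<sigma>_pos i(2)] by (intro phase_length_solves[OF i(2)]) simp
      also have "\<dots> \<le> x i" using monotone_onD[OF x_mono i] by simp
      finally show ?thesis .
    qed
    moreover have "0 < \<sigma> i i" using False \<sigma>_pos by simp
    ultimately show ?thesis using False by (subst phase_length.simps) simp
  qed
qed

definition finish_times :: "nat \<Rightarrow> (nat \<Rightarrow> real) \<Rightarrow> nat \<Rightarrow> real" where
  "finish_times M \<tau> i = (\<Sum>l=i..M. \<tau> l)"

lemma finish_times_last: "finish_times M \<tau> (Suc M) = 0"
  by (simp add: finish_times_def)

lemma finish_times_diff: "i \<le> M \<Longrightarrow> finish_times M \<tau> i - finish_times M \<tau> (Suc i) = \<tau> i"
  by (simp add: finish_times_def sum.atLeast_Suc_atMost)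

lemma finish_times_antimono:
  assumes "\<forall>l\<in>{1..M}. 0 \<le> \<tau> l" "1 \<le> i" "i \<le> j"
  shows "finish_times M \<tau> j \<le> finish_times M \<tau> i"
  unfolding finish_times_def using assms by (intro sum_mono2) auto

lemma finish_times_nonneg: "\<forall>l\<in>{1..M}. 0 \<le> \<tau> l \<Longrightarrow> 1 \<le> i \<Longrightarrow> 0 \<le> finish_times M \<tau> i"
  unfolding finish_times_def by (intro sum_nonneg) auto

lemma has_integral_const_upto_endpoint:
  fixes f :: "real \<Rightarrow> real"
  assumes "a \<le> b" and "\<forall>t. a \<le> t \<and> t < b \<longrightarrow> f t = c"
  shows "(f has_integral (c * (b - a))) {a..b}"
proof (rule has_integral_spike_finite[of "{b}"])
  show "((\<lambda>t. c) has_integral (c * (b - a))) {a..b}"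
    using has_integral_const_real[of c a b] assms(1) by (simp add: mult.commute)
qed (use assms(2) in auto)

lemma has_integral_piecewise_const:
  fixes T :: "nat \<Rightarrow> real" and f :: "real \<Rightarrow> real"
  assumes "i \<le> N" and "\<forall>l\<in>{i..N}. T (Suc l) \<le> T l"
    and "\<forall>l\<in>{i..N}. \<forall>t. T (Suc l) \<le> t \<and> t < T l \<longrightarrow> f t = g l"
  shows "(f has_integral (\<Sum>l=i..N. g l * (T l - T (Suc l)))) {T (Suc N)..T i}"
proof -
  have "(f has_integral (\<Sum>l=i..N. g l * (T l - T (Suc l)))) {T (Suc N)..T i} \<and> T (Suc N) \<le> T i"
    using assms
  proof (induction N rule: dec_induct)
    case base
    then show ?case by (simp add: has_integral_const_upto_endpoint)
  next
    case (step n)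
    then have IH: "(f has_integral (\<Sum>l=i..n. g l * (T l - T (Suc l)))) {T (Suc n)..T i}"
        "T (Suc n) \<le> T i" and T_Suc: "T (Suc (Suc n)) \<le> T (Suc n)"
      by auto
    have "(f has_integral (g (Suc n) * (T (Suc n) - T (Suc (Suc n))))) {T (Suc (Suc n))..T (Suc n)}"
      using step.prems step.hyps T_Suc by (intro has_integral_const_upto_endpoint) auto
    from has_integral_combine[OF T_Suc IH(2) this IH(1)] T_Suc IH(2) step.hyps show ?case
      by (simp add: add.commute)
  qed
  then show ?thesis ..
qed

lemma unfinished_jobs_eq:
  fixes T :: "nat \<Rightarrow> real"
  assumes antimono: "antimono_on {1..M} T"
  shows "{j\<in>{1..M}. t < T j} = {1..card {j\<in>{1..M}. t < T j}}"
proof (cases "{j\<in>{1..M}. t < T j} = {}")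
  case False
  define m where "m = Max {j\<in>{1..M}. t < T j}"
  have m: "m \<in> {j\<in>{1..M}. t < T j}" using Max_in[OF _ False] by (simp add: m_def)
  have "{j\<in>{1..M}. t < T j} = {1..m}"
  proof
    show "{j\<in>{1..M}. t < T j} \<subseteq> {1..m}" by (auto simp: m_def)
    show "{1..m} \<subseteq> {j\<in>{1..M}. t < T j}"
      using m monotone_onD[OF antimono] by (fastforce intro: less_le_trans)
  qed
  then show ?thesis by simp
qed simp

lemma less_iff_le_card_unfinished:
  fixes T :: "nat \<Rightarrow> real"
  assumes "antimono_on {1..M} T" and "i \<in> {1..M}"
  shows "t < T i \<longleftrightarrow> i \<le> card {j\<in>{1..M}. t < T j}"
proof -
  have "i \<in> {j\<in>{1..M}. t < T j} \<longleftrightarrow> i \<in> {1..card {j\<in>{1..M}. t < T j}}"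
    by (subst unfinished_jobs_eq[OF assms(1)]) (rule refl)
  then show ?thesis using assms(2) by simp
qed

lemma card_unfinished_jobs_in_stage:
  fixes T :: "nat \<Rightarrow> real"
  assumes antimono: "antimono_on {1..M} T"
    and l: "l \<in> {1..M}" and t: "T (Suc l) \<le> t" "t < T l"
  shows "card {j\<in>{1..M}. t < T j} = l"
proof -
  have "{j\<in>{1..M}. t < T j} = {1..l}"
  proof
    show "{j\<in>{1..M}. t < T j} \<subseteq> {1..l}"
    proof
      fix j assume j: "j \<in> {j\<in>{1..M}. t < T j}"
      show "j \<in> {1..l}"
      proof (rule ccontr)
        assume "j \<notin> {1..l}"
        then have "T j \<le> T (Suc l)" using j monotone_onD[OF antimono, of "Suc l" j] by auto
        then show False using j t by simp
      qed
    qed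
    show "{1..l} \<subseteq> {j\<in>{1..M}. t < T j}"
      using l t monotone_onD[OF antimono] by (fastforce intro: less_le_trans)
  qed
  then show ?thesis by simp
qed

lemma eventually_at_right_less_iff:
  fixes t c :: real
  shows "eventually (\<lambda>t'. (t' < c) \<longleftrightarrow> (t < c)) (at_right t)"
proof (cases "t < c")
  case True
  then have "eventually (\<lambda>t'. t' < c) (at_right t)"
    unfolding eventually_at_right_field by blast
  then show ?thesis using True by (auto elim: eventually_mono)
next
  case False
  then show ?thesis using eventually_at_right_less[of t] by (auto elim: eventually_mono)
qed

definition staged_schedule :: "nat \<Rightarrow> (nat \<Rightarrow> nat \<Rightarrow> real) \<Rightarrow> (nat \<Rightarrow> real) \<Rightarrow> nat \<Rightarrow> real \<Rightarrow> real" where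
  "staged_schedule M \<Theta> T i t = (if t < T i then \<Theta> (card {j\<in>{1..M}. t < T j}) i else 0)"

lemma staged_schedule_right_continuous:
  "i \<in> {1..M} \<Longrightarrow> continuous (at_right t) (staged_schedule M \<Theta> T i)"
proof -
  assume i: "i \<in> {1..M}"
  have "eventually (\<lambda>t'. \<forall>j\<in>{1..M}. (t' < T j) \<longleftrightarrow> (t < T j)) (at_right t)"
    by (intro eventually_ball_finite ballI eventually_at_right_less_iff) simp
  then have "eventually (\<lambda>t'. staged_schedule M \<Theta> T i t' = staged_schedule M \<Theta> T i t) (at_right t)"
  proof (rule eventually_mono)
    fix t' assume same: "\<forall>j\<in>{1..M}. (t' < T j) \<longleftrightarrow> (t < T j)"
    then have "{j\<in>{1..M}. t' < T j} = {j\<in>{1..M}. t < T j}" by auto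
    then show "staged_schedule M \<Theta> T i t' = staged_schedule M \<Theta> T i t"
      using same i by (simp add: staged_schedule_def)
  qed
  then show ?thesis
    unfolding continuous_within by (rule tendsto_eventually)
qed

lemma card_filter_atLeastAtMost_le: "card {j\<in>{1..M}. P j} \<le> M"
proof -
  have "card {j\<in>{1..M}. P j} \<le> card {1..M}" by (rule card_mono) auto
  then show ?thesis by simp
qed

lemma staged_schedule_bounds:
  assumes "antimono_on {1..M} T" and \<Theta>: "\<forall>l\<in>{1..M}. \<Theta> l \<in> allocations B l" and "0 \<le> B"
    and i: "i \<in> {1..M}"
  shows "0 \<le> staged_schedule M \<Theta> T i t \<and> staged_schedule M \<Theta> T i t \<le> B"
proof (cases "t < T i")
  case True
  define L where "L = card {j\<in>{1..M}. t < T j}"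
  have "i \<le> L" using less_iff_le_card_unfinished[OF assms(1) i] True by (simp add: L_def)
  moreover have "L \<le> M" unfolding L_def by (rule card_filter_atLeastAtMost_le)
  ultimately show ?thesis
    using True allocations_bounds[of "\<Theta> L" B L i] \<Theta> i by (auto simp: staged_schedule_def L_def)
qed (use \<open>0 \<le> B\<close> in \<open>simp add: staged_schedule_def\<close>)

lemma sum_staged_schedule_le:
  assumes "antimono_on {1..M} T" and \<Theta>: "\<forall>l\<in>{1..M}. \<Theta> l \<in> allocations B l" and "0 \<le> B"
  shows "(\<Sum>i=1..M. staged_schedule M \<Theta> T i t) \<le> B"
proof -
  define L where "L = card {j\<in>{1..M}. t < T j}"
  have L: "L \<le> M" unfolding L_def by (rule card_filter_atLeastAtMost_le)
  have running: "t < T i \<longleftrightarrow> i \<le> L" if "i \<in> {1..M}" for i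
    using less_iff_le_card_unfinished[OF assms(1) that] by (simp add: L_def)
  have "(\<Sum>i=1..M. staged_schedule M \<Theta> T i t) = (\<Sum>i=1..L. \<Theta> L i)"
  proof (rule sum.mono_neutral_cong_right)
    show "\<forall>i\<in>{1..M} - {1..L}. staged_schedule M \<Theta> T i t = 0"
      using running by (auto simp: staged_schedule_def)
    show "staged_schedule M \<Theta> T i t = \<Theta> L i" if "i \<in> {1..L}" for i
      using that L running[of i] by (simp add: staged_schedule_def L_def)
  qed (use L in auto)
  also have "\<dots> \<le> B"
  proof (cases "L = 0")
    case False
    then show ?thesis using \<Theta> L by (auto simp: allocations_def)
  qed (use \<open>0 \<le> B\<close> in simp)
  finally show ?thesis .
qed

lemma staged_schedule_has_integral:
  assumes \<tau>: "\<forall>l\<in>{1..M}. 0 \<le> \<tau> l" and i: "i \<in> {1..M}"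
  shows "((\<lambda>t. s (staged_schedule M \<Theta> (finish_times M \<tau>) i t)) has_integral
      (\<Sum>l=i..M. s (\<Theta> l i) * \<tau> l)) {0..finish_times M \<tau> i}"
proof -
  define T where "T = finish_times M \<tau>"
  have antimono: "antimono_on {1..M} T"
    using finish_times_antimono[OF \<tau>] by (auto simp: T_def monotone_on_def)
  have "((\<lambda>t. s (staged_schedule M \<Theta> T i t)) has_integral (\<Sum>l=i..M. s (\<Theta> l i) * (T l - T (Suc l))))
      {T (Suc M)..T i}"
  proof (rule has_integral_piecewise_const)
    show "\<forall>l\<in>{i..M}. T (Suc l) \<le> T l"
      using i finish_times_antimono[OF \<tau>] by (simp add: T_def)
    show "\<forall>l\<in>{i..M}. \<forall>t. T (Suc l) \<le> t \<and> t < T l \<longrightarrow> s (staged_schedule M \<Theta> T i t) = s (\<Theta> l i)"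
    proof (intro ballI allI impI)
      fix l t assume l: "l \<in> {i..M}" and t: "T (Suc l) \<le> t \<and> t < T l"
      have "T l \<le> T i" using monotone_onD[OF antimono, of i l] l i by simp
      then show "s (staged_schedule M \<Theta> T i t) = s (\<Theta> l i)"
        using card_unfinished_jobs_in_stage[OF antimono, of l t] l i t
        by (simp add: staged_schedule_def)
    qed
  qed (use i in simp)
  then show ?thesis by (simp add: T_def finish_times_last finish_times_diff)
qed

lemma staged_schedule_feasible:
  assumes "0 \<le> B"
    and \<Theta>: "\<forall>l\<in>{1..M}. \<Theta> l \<in> allocations B l" and \<tau>: "\<forall>l\<in>{1..M}. 0 \<le> \<tau> l"
    and service: "\<forall>i\<in>{1..M}. (\<Sum>l=i..M. s (\<Theta> l i) * \<tau> l) = x i"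
  shows "feasible_schedule M B s x (staged_schedule M \<Theta> (finish_times M \<tau>)) (finish_times M \<tau>)"
proof -
  define T where "T = finish_times M \<tau>"
  define \<theta> where "\<theta> = staged_schedule M \<Theta> T"
  have antimono: "antimono_on {1..M} T"
    using finish_times_antimono[OF \<tau>] by (auto simp: T_def monotone_on_def)
  have "\<forall>i\<in>{1..M}. 0 \<le> T i \<and> (\<forall>t>0. 0 \<le> \<theta> i t \<and> \<theta> i t \<le> B) \<and>
      (\<forall>t>0. continuous (at_right t) (\<theta> i)) \<and>
      (\<lambda>t. s (\<theta> i t)) integrable_on {0..T i} \<and> integral {0..T i} (\<lambda>t. s (\<theta> i t)) = x i \<and>
      (\<forall>t>T i. \<theta> i t = 0)"
  proof (intro ballI conjI allI impI)
    fix i assume i: "i \<in> {1..M}"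
    have "((\<lambda>t. s (\<theta> i t)) has_integral x i) {0..T i}"
      using staged_schedule_has_integral[OF \<tau> i, of s \<Theta>] service i by (simp add: \<theta>_def T_def)
    then show "(\<lambda>t. s (\<theta> i t)) integrable_on {0..T i}" "integral {0..T i} (\<lambda>t. s (\<theta> i t)) = x i"
      by (auto simp: has_integral_integrable integral_unique)
    show "0 \<le> T i" using i \<tau> by (simp add: T_def finish_times_nonneg)
    fix t
    show "0 \<le> \<theta> i t" "\<theta> i t \<le> B"
      using staged_schedule_bounds[OF antimono \<Theta> \<open>0 \<le> B\<close> i] by (simp_all add: \<theta>_def)
    show "continuous (at_right t) (\<theta> i)"
      unfolding \<theta>_def using i by (rule staged_schedule_right_continuous)
    show "T i < t \<Longrightarrow> \<theta> i t = 0" by (simp add: \<theta>_def staged_schedule_def)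
  qed
  moreover have "\<forall>t>0. (\<Sum>i=1..M. \<theta> i t) \<le> B"
    using sum_staged_schedule_le[OF antimono \<Theta> \<open>0 \<le> B\<close>] by (simp add: \<theta>_def)
  ultimately show ?thesis
    unfolding feasible_schedule_def T_def[symmetric] \<theta>_def[symmetric] by blast
qed

lemma sum_triangle_swap:
  fixes f :: "nat \<Rightarrow> nat \<Rightarrow> real"
  shows "(\<Sum>i=1..M. \<Sum>l=i..M. f i l) = (\<Sum>l=1..M. \<Sum>i=1..l. f i l)"
proof (induction M)
  case (Suc M)
  have "(\<Sum>i=1..Suc M. \<Sum>l=i..Suc M. f i l) = (\<Sum>i=1..Suc M. (\<Sum>l=i..M. f i l) + f i (Suc M))"
    by (rule sum.cong) auto
  then show ?case using Suc by (simp add: sum.distrib)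
qed simp

lemma weighted_service_eq_cost:
  assumes "\<forall>l\<in>{1..M}. (\<Sum>i=1..l. a i * \<sigma> l i) = (\<Sum>i=1..l. w i)"
  shows "(\<Sum>i=1..M. a i * (\<Sum>l=i..M. \<sigma> l i * \<tau> l)) = (\<Sum>i=1..M. w i * finish_times M \<tau> i)"
proof -
  have "(\<Sum>i=1..M. a i * (\<Sum>l=i..M. \<sigma> l i * \<tau> l)) = (\<Sum>i=1..M. \<Sum>l=i..M. a i * \<sigma> l i * \<tau> l)"
    by (simp add: sum_distrib_left mult.assoc)
  also have "\<dots> = (\<Sum>l=1..M. \<Sum>i=1..l. a i * \<sigma> l i * \<tau> l)"
    by (rule sum_triangle_swap)
  also have "\<dots> = (\<Sum>l=1..M. (\<Sum>i=1..l. w i) * \<tau> l)"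
    using assms by (simp add: sum_distrib_right[symmetric])
  also have "\<dots> = (\<Sum>l=1..M. \<Sum>i=1..l. w i * \<tau> l)"
    by (simp add: sum_distrib_right)
  also have "\<dots> = (\<Sum>i=1..M. \<Sum>l=i..M. w i * \<tau> l)"
    by (rule sum_triangle_swap[symmetric])
  also have "\<dots> = (\<Sum>i=1..M. w i * finish_times M \<tau> i)"
    by (simp add: finish_times_def sum_distrib_left)
  finally show ?thesis .
qed

text \<open>Since \<open>a\<close> increases, a maximiser \<open>\<Theta> l\<close> serves larger indices faster, so running \<open>\<Theta> l\<close>
  while the jobs \<open>1..l\<close> are unfinished makes the jobs finish in order of decreasing index; by the
  balancing property a phase of length \<open>\<tau>\<close> contributes \<open>\<tau> * (w 1 + \<dots> + w l)\<close> to both sides.\<close>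
lemma balancing_coeffs_cost_attained:
  assumes sp: "speedup_fn s B" and B: "0 < B" and bal: "balancing_coeffs s B w a M"
    and w_pos: "\<forall>i\<in>{1..M}. 0 < w i"
    and x_nonneg: "\<forall>i\<in>{1..M}. 0 \<le> x i" and x_mono: "antimono_on {1..M} x"
  obtains \<theta> T where "feasible_schedule M B s x \<theta> T" "(\<Sum>i=1..M. w i * T i) = (\<Sum>i=1..M. a i * x i)"
proof -
  have "0 \<le> B" using B by simp
  have "\<exists>\<theta>. \<theta> \<in> allocations B l \<and> weighted_rate s a l \<theta> = max_rate s B a l" for l
    using max_rate_attained[OF sp \<open>0 \<le> B\<close>] by metis
  then obtain \<Theta> where \<Theta>: "\<And>l. \<Theta> l \<in> allocations B l" "\<And>l. weighted_rate s a l (\<Theta> l) = max_rate s B a l"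
    by metis
  have opt: "weighted_rate s a l (\<Theta> l) = (\<Sum>i=1..l. w i)" if "l \<in> {1..M}" for l
    using \<Theta>(2) bal that by (simp add: balancing_coeffs_def)
  have a_mono: "strict_mono_on {1..l} a" if "l \<le> M" for l
    using bal that by (auto simp: balancing_coeffs_def strict_mono_on_def)
  define \<sigma> where "\<sigma> l i = s (\<Theta> l i)" for l i
  have \<sigma>_mono: "\<forall>l\<in>{1..M}. \<forall>i\<in>{1..<l}. \<sigma> l i \<le> \<sigma> l (Suc i)"
    using max_rate_sorted[OF sp \<open>0 \<le> B\<close> a_mono \<Theta>] allocations_bounds[OF \<Theta>(1)] speedup_fn_le[OF sp]
    by (simp add: \<sigma>_def)
  have \<sigma>_pos: "\<forall>l\<in>{1..M}. 0 < \<sigma> l l"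
  proof
    fix l assume l: "l \<in> {1..M}"
    have "0 < (\<Sum>i=1..l. w i)" using w_pos l by (intro sum_pos) auto
    then have "0 < \<Theta> l l"
      using max_rate_maximiser_last_pos[OF sp \<open>0 \<le> B\<close> a_mono \<Theta>] opt[OF l] \<Theta>(2) l by simp
    then show "0 < \<sigma> l l"
      using speedup_fn_pos[OF sp] allocations_bounds[OF \<Theta>(1)] l by (simp add: \<sigma>_def)
  qed
  define \<tau> where "\<tau> = phase_length M x \<sigma>"
  have \<tau>_nonneg: "\<forall>l\<in>{1..M}. 0 \<le> \<tau> l"
    using phase_length_nonneg[OF x_nonneg x_mono \<sigma>_mono \<sigma>_pos] by (simp add: \<tau>_def)
  have service: "\<forall>i\<in>{1..M}. (\<Sum>l=i..M. \<sigma> l i * \<tau> l) = x i"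
    using phase_length_solves \<sigma>_pos unfolding \<tau>_def by (metis less_irrefl)
  have "feasible_schedule M B s x (staged_schedule M \<Theta> (finish_times M \<tau>)) (finish_times M \<tau>)"
    using \<Theta>(1) service by (intro staged_schedule_feasible[OF \<open>0 \<le> B\<close> _ \<tau>_nonneg]) (auto simp: \<sigma>_def)
  moreover have "(\<Sum>i=1..M. w i * finish_times M \<tau> i) = (\<Sum>i=1..M. a i * x i)"
    using weighted_service_eq_cost[of M a \<sigma> w \<tau>] opt service
    by (simp add: \<sigma>_def weighted_rate_def mult.commute)
  ultimately show thesis by (rule that)
qed

theorem proposition9:
  fixes M :: nat and B :: real and s :: "real \<Rightarrow> real" and w :: "nat \<Rightarrow> real"
  assumes B_pos: "B > 0"
    and s_ok: "speedup_fn s B"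
    and w_pos: "\<forall>i\<in>{1..M}. 0 < w i"
    and w_mono: "\<forall>i\<in>{1..M}. \<forall>j\<in>{1..M}. i \<le> j \<longrightarrow> w i \<le> w j"
  shows "\<exists>a :: nat \<Rightarrow> real.
           (\<forall>i\<in>{1..M}. \<forall>j\<in>{1..M}. i < j \<longrightarrow> a i < a j) \<and>
           (\<forall>x :: nat \<Rightarrow> real.
              (\<forall>i\<in>{1..M}. 0 < x i) \<and>
              (\<forall>i\<in>{1..M}. \<forall>j\<in>{1..M}. i \<le> j \<longrightarrow> x j \<le> x i) \<longrightarrow>
              (\<Sum>i\<in>{1..M}. a i * x i) \<in> OPT_values M B s w x \<and>
              (\<forall>J\<in>OPT_values M B s w x. (\<Sum>i\<in>{1..M}. a i * x i) \<le> J))"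
proof -
  have w_mono': "mono_on {1..M} w" using w_mono by (auto intro: mono_onI)
  obtain a where bal: "balancing_coeffs s B w a M"
    using balancing_coeffs_exist[OF s_ok B_pos w_pos w_mono'] .
  have "(\<Sum>i\<in>{1..M}. a i * x i) \<in> OPT_values M B s w x \<and>
      (\<forall>J\<in>OPT_values M B s w x. (\<Sum>i\<in>{1..M}. a i * x i) \<le> J)"
    if x_pos: "\<forall>i\<in>{1..M}. 0 < x i" and x_mono: "\<forall>i\<in>{1..M}. \<forall>j\<in>{1..M}. i \<le> j \<longrightarrow> x j \<le> x i"
    for x :: "nat \<Rightarrow> real"
  proof
    have x_nonneg: "\<forall>i\<in>{1..M}. 0 \<le> x i" using x_pos by (simp add: less_imp_le)
    have x_mono': "antimono_on {1..M} x" using x_mono by (auto simp: monotone_on_def)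
    obtain \<theta> T where "feasible_schedule M B s x \<theta> T" "(\<Sum>i=1..M. w i * T i) = (\<Sum>i=1..M. a i * x i)"
      using balancing_coeffs_cost_attained[OF s_ok B_pos bal w_pos x_nonneg x_mono'] .
    then show "(\<Sum>i\<in>{1..M}. a i * x i) \<in> OPT_values M B s w x"
      unfolding OPT_values_def by force
    show "\<forall>J\<in>OPT_values M B s w x. (\<Sum>i\<in>{1..M}. a i * x i) \<le> J"
      using feasible_schedule_cost_ge[OF s_ok _ bal w_mono' x_nonneg x_mono'] B_pos
      unfolding OPT_values_def by auto
  qed
  moreover have "\<forall>i\<in>{1..M}. \<forall>j\<in>{1..M}. i < j \<longrightarrow> a i < a j"
    using bal by (auto simp: balancing_coeffs_def strict_mono_on_def)
  ultimately show ?thesis by blast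
qed

end
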